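(* Let $\omega\in(0,\pi/2]$, let $S$ be a monotone sofa with rotation angle $\omega$, and let $K=\mathcal{C}(S)$. Then $\mathcal{N}(K)\subseteq K$.
   Context: For $t\in\mathbb{R}$ put $u_t=(\cos t,\sin t)$, $v_t=(-\sin t,\cos t)$; $R_t$ is counterclockwise rotation about the origin by $t$. For nonempty compact $X$, $p_X(t)=\max_{p\in X}p\cdot u_t$; $H(t,h)=\{p:p\cdot u_t\le h\}$. The hallway is $L=L_H\cup L_V$, $L_H=(-\infty,1]\times[0,1]$, $L_V=[0,1]\times(-\infty,1]$. A moving sofa is a connected, nonempty, compact $S\subset\mathbb{R}^2$ such that some translate of $S$ lies in $L_H$ and can be moved by a continuous rigid motion inside $L$ to a subset of $L_V$; its rotation angle $\omega\in(0,\pi/2]$ is the total clockwise angle rotated (fixed data of the sofa). It is in standard position if $p_S(\omega)=p_S(\pi/2)=1$. Let $H=\mathbb{R}\times[0,1]$, $V=[0,1]\times\mathbb{R}$, $P_\omega=H\cap R_\omega(V)$. For nonempty compact $X$: $L_X(t)=R_t(L)+(p_X(t)-1)u_t+(p_X(t+\pi/2)-1)v_t$, $Q_X^+(t)=H(t,p_X(t))\cap H(t+\pi/2,p_X(t+\pi/2))$, $Q_X^-(t)=\{p:p\cdot u_t<p_X(t)-1,\ p\cdot v_t<p_X(t+\pi/2)-1\}$. A monotone sofa with rotation angle $\omega$ is a set $P_\omega\cap\bigcap_{0\le t\le\omega}L_{S'}(t)$ for some moving sofa $S'$ with rotation angle $\omega$ in standard position. $\mathcal{C}(S)=P_\omega\cap\bigcap_{0\le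 t\le\omega}Q_S^+(t)$. Fan $F_\omega=\{(x,y):y\ge0,\ x\cos\omega+y\sin\omega\ge0\}$; niche $\mathcal{N}(K)=F_\omega\cap\bigcup_{0\le t\le\omega}Q_K^-(t)$. *)

theory Defs
  imports "HOL-Analysis.Analysis"
begin

type_synonym pt = "real \<times> real"

definition uvec :: "real \<Rightarrow> pt" where "uvec t = (cos t, sin t)"
definition vvec :: "real \<Rightarrow> pt" where "vvec t = (- sin t, cos t)"

definition rot :: "real \<Rightarrow> pt \<Rightarrow> pt" where
  "rot t p = (fst p * cos t - snd p * sin t, fst p * sin t + snd p * cos t)"

definition supp :: "pt set \<Rightarrow> real \<Rightarrow> real" where
  "supp X t = Sup ((\<lambda>p. p \<bullet> uvec t) ` X)"

definition halfplane :: "real \<Rightarrow> real \<Rightarrow> pt set" where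
  "halfplane t h = {p. p \<bullet> uvec t \<le> h}"

definition LH :: "pt set" where "LH = {p. fst p \<le> 1 \<and> 0 \<le> snd p \<and> snd p \<le> 1}"
definition LV :: "pt set" where "LV = {p. 0 \<le> fst p \<and> fst p \<le> 1 \<and> snd p \<le> 1}"
definition hallway :: "pt set" where "hallway = LH \<union> LV"

text \<open>Moving sofa with rotation angle \<omega>: continuous rigid motion
  p \<mapsto> R_{-\<theta>(s)} p + x(s), s \<in> [0,1], with \<theta>(0)=0 and \<theta>(1)=\<omega>
  (total clockwise rotation \<omega>), staying in L, starting in L_H and ending in L_V.\<close>
definition moving_sofa :: "pt set \<Rightarrow> real \<Rightarrow> bool" where
  "moving_sofa S \<omega> \<longleftrightarrow> connected S \<and> S \<noteq> {} \<and> compact S \<and>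
     (\<exists>\<theta> :: real \<Rightarrow> real. \<exists>x :: real \<Rightarrow> pt.
        continuous_on {0..1} \<theta> \<and> continuous_on {0..1} x \<and>
        \<theta> 0 = 0 \<and> \<theta> 1 = \<omega> \<and>
        (\<forall>s\<in>{0..1}. (\<lambda>p. rot (- \<theta> s) p + x s) ` S \<subseteq> hallway) \<and>
        (\<lambda>p. rot (- \<theta> 0) p + x 0) ` S \<subseteq> LH \<and>
        (\<lambda>p. rot (- \<theta> 1) p + x 1) ` S \<subseteq> LV)"

definition standard_position :: "pt set \<Rightarrow> real \<Rightarrow> bool" where
  "standard_position S \<omega> \<longleftrightarrow> supp S \<omega> = 1 \<and> supp S (pi/2) = 1"

definition Hstrip :: "pt set" where "Hstrip = {p. 0 \<le> snd p \<and> snd p \<le> 1}"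
definition Vstrip :: "pt set" where "Vstrip = {p. 0 \<le> fst p \<and> fst p \<le> 1}"

definition Pw :: "real \<Rightarrow> pt set" where "Pw \<omega> = Hstrip \<inter> rot \<omega> ` Vstrip"

definition LX :: "pt set \<Rightarrow> real \<Rightarrow> pt set" where
  "LX X t = (\<lambda>q. rot t q + (supp X t - 1) *\<^sub>R uvec t + (supp X (t + pi/2) - 1) *\<^sub>R vvec t) ` hallway"

definition Qplus :: "pt set \<Rightarrow> real \<Rightarrow> pt set" where
  "Qplus X t = halfplane t (supp X t) \<inter> halfplane (t + pi/2) (supp X (t + pi/2))"

definition Qminus :: "pt set \<Rightarrow> real \<Rightarrow> pt set" where
  "Qminus X t = {p. p \<bullet> uvec t < supp X t - 1 \<and> p \<bullet> vvec t < supp X (t + pi/2) - 1}"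

definition monotone_sofa :: "real \<Rightarrow> pt set \<Rightarrow> bool" where
  "monotone_sofa \<omega> S \<longleftrightarrow> (\<exists>S'. moving_sofa S' \<omega> \<and> standard_position S' \<omega> \<and>
      S = Pw \<omega> \<inter> (\<Inter>t\<in>{0..\<omega>}. LX S' t))"

definition cap :: "real \<Rightarrow> pt set \<Rightarrow> pt set" where
  "cap \<omega> S = Pw \<omega> \<inter> (\<Inter>t\<in>{0..\<omega>}. Qplus S t)"

definition fan :: "real \<Rightarrow> pt set" where
  "fan \<omega> = {p. snd p \<ge> 0 \<and> fst p * cos \<omega> + snd p * sin \<omega> \<ge> 0}"

definition niche :: "real \<Rightarrow> pt set \<Rightarrow> pt set" where
  "niche \<omega> K = fan \<omega> \<inter> (\<Union>t\<in>{0..\<omega>}. Qminus K t)"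

end

theory Submission
  imports Defs
begin

text \<open>Let S' be the moving sofa generating S. Since S' lies in S and S lies in the hallways
  L_{S'}(t), the two sets have the same support function in the directions that matter, so
  K = C(S'). A point p of the niche lies, for some t, strictly inside the inner corner of the
  hallway L_{S'}(t). The connected set S' lies in that hallway and reaches both of its arms, so it
  meets the inner quadrant in a point d, which dominates p in every direction u_s with
  t \<le> s \<le> t + \<pi>/2. In the directions u_s with s < t, a point a of S' beyond p + u_t in the
  direction u_t dominates p, because the y-coordinates of p and a differ by at most 1; the
  directions beyond t + \<pi>/2 are handled symmetrically with the strip 0 \<le> x \<bullet> u_\<omega> \<le> 1.
  Hence p \<bullet> u_s \<le> p_{S'}(s) for all s \<in> [0, \<omega> + \<pi>/2], which puts p into C(S') = K.\<close>

lemma inner_uvec: "p \<bullet> uvec t = fst p * cos t + snd p * sin t"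
  by (cases p) (simp add: uvec_def)

lemma vvec_eq_uvec: "vvec t = uvec (t + pi/2)"
  by (simp add: uvec_def vvec_def cos_add sin_add)

lemma rot_eq_frame: "rot t q = fst q *\<^sub>R uvec t + snd q *\<^sub>R vvec t"
  by (simp add: rot_def uvec_def vvec_def)

lemma frame_inner:
  "uvec t \<bullet> uvec t = 1" "vvec t \<bullet> vvec t = 1" "uvec t \<bullet> vvec t = 0" "vvec t \<bullet> uvec t = 0"
  by (simp_all add: uvec_def vvec_def power2_eq_square[symmetric])

lemma frame_expansion: "z = (z \<bullet> uvec t) *\<^sub>R uvec t + (z \<bullet> vvec t) *\<^sub>R vvec t"
proof -
  have pyth: "cos t * cos t + sin t * sin t = 1" by (rule sin_cos_squared_add3)
  have "fst z = (fst z * cos t + snd z * sin t) * cos t - (snd z * cos t - fst z * sin t) * sin t"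
    using pyth by algebra
  moreover have "snd z = (fst z * cos t + snd z * sin t) * sin t + (snd z * cos t - fst z * sin t) * cos t"
    using pyth by algebra
  ultimately show ?thesis
    by (simp add: uvec_def vvec_def inner_prod_def prod_eq_iff)
qed

lemma mem_rot_translate_image_iff:
  "z \<in> (\<lambda>q. rot t q + c) ` H \<longleftrightarrow> ((z - c) \<bullet> uvec t, (z - c) \<bullet> vvec t) \<in> H"
proof
  assume "z \<in> (\<lambda>q. rot t q + c) ` H"
  then obtain q where "q \<in> H" "z - c = rot t q" by auto
  then show "((z - c) \<bullet> uvec t, (z - c) \<bullet> vvec t) \<in> H"
    by (simp add: rot_eq_frame inner_add_left frame_inner)
next
  assume "((z - c) \<bullet> uvec t, (z - c) \<bullet> vvec t) \<in> H"
  moreover have "z = rot t ((z - c) \<bullet> uvec t, (z - c) \<bullet> vvec t) + c"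
    using frame_expansion[of "z - c" t] by (simp add: rot_eq_frame algebra_simps)
  ultimately show "z \<in> (\<lambda>q. rot t q + c) ` H" by blast
qed

lemma rot_neg_eq: "rot (- t) p = (p \<bullet> uvec t, p \<bullet> vvec t)"
  by (simp add: rot_def uvec_def vvec_def inner_prod_def)

lemma inner_uvec_three_angles:
  "sin (z - y) * (q \<bullet> uvec x) = sin (z - x) * (q \<bullet> uvec y) + sin (x - y) * (q \<bullet> uvec z)"
  by (simp add: inner_uvec sin_diff algebra_simps)

lemma inner_uvec_reflect: "(fst q, - snd q) \<bullet> uvec t = q \<bullet> uvec (- t)"
  by (simp add: inner_uvec)

lemma inner_uvec_nonneg_between:
  assumes "0 \<le> q \<bullet> uvec y" "0 \<le> q \<bullet> uvec z" "y \<le> x" "x \<le> z" "z - y < pi"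
  shows "0 \<le> q \<bullet> uvec x"
proof (cases "y = z")
  case True
  then show ?thesis using assms by simp
next
  case False
  have "0 < sin (z - y)" using assms False by (intro sin_gt_zero) auto
  have "0 \<le> sin (z - x) * (q \<bullet> uvec y) + sin (x - y) * (q \<bullet> uvec z)"
    using assms by (intro add_nonneg_nonneg mult_nonneg_nonneg sin_ge_zero) auto
  then have "0 \<le> sin (z - y) * (q \<bullet> uvec x)"
    by (subst inner_uvec_three_angles)
  with \<open>0 < sin (z - y)\<close> show ?thesis by (simp add: zero_le_mult_iff)
qed

lemma inner_uvec_nonneg_before:
  assumes "1 \<le> q \<bullet> uvec y" "q \<bullet> uvec z \<le> 1" "x \<le> y" "y < z" "z - x \<le> pi/2"
  shows "0 \<le> q \<bullet> uvec x"
proof -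
  have "0 < sin (z - y)" using assms by (intro sin_gt_zero) auto
  have "sin (y - x) \<le> sin (z - x)" using assms by (intro sin_monotone_2pi_le) auto
  moreover have "sin (z - x) * 1 \<le> sin (z - x) * (q \<bullet> uvec y)"
    using assms by (intro mult_left_mono sin_ge_zero) auto
  moreover have "sin (y - x) * (q \<bullet> uvec z) \<le> sin (y - x) * 1"
    using assms by (intro mult_left_mono sin_ge_zero) auto
  moreover have "sin (x - y) = - sin (y - x)"
    using sin_minus[of "y - x"] by simp
  ultimately have "0 \<le> sin (z - x) * (q \<bullet> uvec y) + sin (x - y) * (q \<bullet> uvec z)"
    by simp
  then have "0 \<le> sin (z - y) * (q \<bullet> uvec x)"
    by (subst inner_uvec_three_angles)
  with \<open>0 < sin (z - y)\<close> show ?thesis by (simp add: zero_le_mult_iff)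
qed

lemma inner_uvec_nonneg_after:
  assumes "1 \<le> q \<bullet> uvec y" "q \<bullet> uvec z \<le> 1" "z < y" "y \<le> x" "x - z \<le> pi/2"
  shows "0 \<le> q \<bullet> uvec x"
  using inner_uvec_nonneg_before[of "(fst q, - snd q)" "- y" "- z" "- x"] assms
  by (simp add: inner_uvec_reflect)

lemma inner_le_supp: "(\<And>y. y \<in> X \<Longrightarrow> y \<bullet> uvec t \<le> B) \<Longrightarrow> z \<in> X \<Longrightarrow> z \<bullet> uvec t \<le> supp X t"
  unfolding supp_def by (rule cSup_upper) (auto intro!: bdd_aboveI)

lemma inner_le_supp_compact: "compact X \<Longrightarrow> z \<in> X \<Longrightarrow> z \<bullet> uvec t \<le> supp X t"
  unfolding supp_def
  by (intro cSup_upper imageI bounded_imp_bdd_above compact_imp_bounded compact_continuous_image)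
     (auto intro: continuous_intros)

lemma supp_le: "X \<noteq> {} \<Longrightarrow> (\<And>y. y \<in> X \<Longrightarrow> y \<bullet> uvec t \<le> B) \<Longrightarrow> supp X t \<le> B"
  unfolding supp_def by (rule cSup_least) auto

lemma less_suppD: "X \<noteq> {} \<Longrightarrow> c < supp X t \<Longrightarrow> \<exists>y\<in>X. c < y \<bullet> uvec t"
  unfolding supp_def using less_cSupD[of "(\<lambda>p. p \<bullet> uvec t) ` X" c] by auto

lemma supp_eq_if_subset_halfplane:
  assumes "X \<noteq> {}" "X \<subseteq> Y" "Y \<subseteq> halfplane t (supp X t)"
  shows "supp Y t = supp X t"
proof (rule antisym)
  show "supp Y t \<le> supp X t"
    using assms by (intro supp_le) (auto simp: halfplane_def)
  have "bdd_above ((\<lambda>p. p \<bullet> uvec t) ` Y)"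
    using assms(3) by (auto simp: halfplane_def intro!: bdd_aboveI)
  then show "supp X t \<le> supp Y t"
    unfolding supp_def using assms(1,2) by (intro cSup_subset_mono) auto
qed

lemma mem_Qplus_iff:
  "p \<in> Qplus X t \<longleftrightarrow> p \<bullet> uvec t \<le> supp X t \<and> p \<bullet> uvec (t + pi/2) \<le> supp X (t + pi/2)"
  by (simp add: Qplus_def halfplane_def)

lemma mem_Qminus_iff:
  "p \<in> Qminus X t \<longleftrightarrow> p \<bullet> uvec t < supp X t - 1 \<and> p \<bullet> uvec (t + pi/2) < supp X (t + pi/2) - 1"
  by (simp add: Qminus_def vvec_eq_uvec)

lemma mem_hallway_iff: "q \<in> hallway \<longleftrightarrow> fst q \<le> 1 \<and> snd q \<le> 1 \<and> (0 \<le> fst q \<or> 0 \<le> snd q)"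
  by (auto simp: hallway_def LH_def LV_def)

lemma mem_LX_iff:
  "z \<in> LX X t \<longleftrightarrow> z \<bullet> uvec t \<le> supp X t \<and> z \<bullet> uvec (t + pi/2) \<le> supp X (t + pi/2) \<and>
     (supp X t - 1 \<le> z \<bullet> uvec t \<or> supp X (t + pi/2) - 1 \<le> z \<bullet> uvec (t + pi/2))"
  unfolding LX_def add.assoc mem_rot_translate_image_iff mem_hallway_iff
  by (simp add: inner_diff_left inner_add_left frame_inner vvec_eq_uvec[symmetric])

lemma LX_subset_Qplus: "LX X t \<subseteq> Qplus X t"
  by (auto simp: mem_LX_iff mem_Qplus_iff)

lemma mem_Pw_iff:
  "p \<in> Pw \<omega> \<longleftrightarrow> 0 \<le> p \<bullet> uvec (pi/2) \<and> p \<bullet> uvec (pi/2) \<le> 1 \<and> 0 \<le> p \<bullet> uvec \<omega> \<and> p \<bullet> uvec \<omega> \<le> 1"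
proof -
  have "p \<in> rot \<omega> ` Vstrip \<longleftrightarrow> 0 \<le> p \<bullet> uvec \<omega> \<and> p \<bullet> uvec \<omega> \<le> 1"
    using mem_rot_translate_image_iff[of p \<omega> 0 Vstrip] by (simp add: Vstrip_def)
  then show ?thesis by (simp add: Pw_def Hstrip_def inner_uvec)
qed

lemma mem_fan_iff: "p \<in> fan \<omega> \<longleftrightarrow> 0 \<le> p \<bullet> uvec (pi/2) \<and> 0 \<le> p \<bullet> uvec \<omega>"
  by (simp add: fan_def inner_uvec)

lemma subset_LX_if_moved_into_hallway:
  assumes moved: "(\<lambda>p. rot (- t) p + c) ` X \<subseteq> hallway" and "X \<noteq> {}"
  shows "X \<subseteq> LX X t"
proof
  have H: "p \<bullet> uvec t + fst c \<le> 1 \<and> p \<bullet> uvec (t + pi/2) + snd c \<le> 1 \<and>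
      (0 \<le> p \<bullet> uvec t + fst c \<or> 0 \<le> p \<bullet> uvec (t + pi/2) + snd c)" if "p \<in> X" for p
  proof -
    have "rot (- t) p + c \<in> hallway" using moved that by blast
    then show ?thesis by (simp add: rot_neg_eq vvec_eq_uvec mem_hallway_iff)
  qed
  have bound_u: "y \<bullet> uvec t \<le> 1 - fst c" and bound_v: "y \<bullet> uvec (t + pi/2) \<le> 1 - snd c"
    if "y \<in> X" for y
    using H[OF that] by linarith+
  fix p assume "p \<in> X"
  have "supp X t \<le> 1 - fst c" using \<open>X \<noteq> {}\<close> bound_u by (rule supp_le)
  moreover have "supp X (t + pi/2) \<le> 1 - snd c" using \<open>X \<noteq> {}\<close> bound_v by (rule supp_le)
  moreover have "p \<bullet> uvec t \<le> supp X t" using bound_u \<open>p \<in> X\<close> by (rule inner_le_supp)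
  moreover have "p \<bullet> uvec (t + pi/2) \<le> supp X (t + pi/2)" using bound_v \<open>p \<in> X\<close> by (rule inner_le_supp)
  ultimately show "p \<in> LX X t"
    using H[OF \<open>p \<in> X\<close>] unfolding mem_LX_iff by linarith
qed

lemma connected_subset_LX_imp_corner_point:
  assumes "connected X" "X \<noteq> {}" "X \<subseteq> LX X t"
  shows "\<exists>d\<in>X. supp X t - 1 \<le> d \<bullet> uvec t \<and> supp X (t + pi/2) - 1 \<le> d \<bullet> uvec (t + pi/2)"
proof (rule ccontr)
  define U where "U = {q. q \<bullet> uvec t < supp X t - 1}"
  define V where "V = {q. q \<bullet> uvec (t + pi/2) < supp X (t + pi/2) - 1}"
  assume "\<not> ?thesis"
  then have "X \<subseteq> U \<union> V" by (auto simp: U_def V_def not_le)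
  moreover have "open U" "open V"
    unfolding U_def V_def by (intro open_Collect_less continuous_intros)+
  moreover have "U \<inter> V \<inter> X = {}"
    using assms(3) by (auto simp: U_def V_def mem_LX_iff)
  ultimately have "U \<inter> X = {} \<or> V \<inter> X = {}"
    using connectedD[OF assms(1)] by blast
  moreover obtain a where "a \<in> X" "supp X t - 1 < a \<bullet> uvec t"
    using less_suppD[OF assms(2), of "supp X t - 1" t] by auto
  moreover obtain b where "b \<in> X" "supp X (t + pi/2) - 1 < b \<bullet> uvec (t + pi/2)"
    using less_suppD[OF assms(2), of "supp X (t + pi/2) - 1" "t + pi/2"] by auto
  ultimately show False
    using \<open>X \<subseteq> U \<union> V\<close> by (auto simp: U_def V_def)
qed

lemma moving_sofa_subset_LX:
  assumes "moving_sofa S \<omega>" "t \<in> {0..\<omega>}"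
  shows "S \<subseteq> LX S t"
proof -
  obtain \<theta> :: "real \<Rightarrow> real" and x :: "real \<Rightarrow> pt" where "S \<noteq> {}"
    and "continuous_on {0..1} \<theta>" "\<theta> 0 = 0" "\<theta> 1 = \<omega>"
    and moved: "\<forall>s\<in>{0..1}. (\<lambda>p. rot (- \<theta> s) p + x s) ` S \<subseteq> hallway"
    using assms(1) unfolding moving_sofa_def by blast
  moreover obtain s where "s \<in> {0..1}" "\<theta> s = t"
    using IVT'[of \<theta> 0 t 1] assms(2) calculation by auto
  ultimately have "(\<lambda>p. rot (- t) p + x s) ` S \<subseteq> hallway" by blast
  then show ?thesis using \<open>S \<noteq> {}\<close> by (rule subset_LX_if_moved_into_hallway)
qed

lemma inner_in_unit_interval_if_supp_eq_1:
  assumes "X \<noteq> {}" "supp X t = 1" "\<And>q. q \<in> X \<Longrightarrow> 0 \<le> q \<bullet> uvec t + c \<and> q \<bullet> uvec t + c \<le> 1"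
    and "q \<in> X"
  shows "0 \<le> q \<bullet> uvec t \<and> q \<bullet> uvec t \<le> 1"
proof -
  have bound: "y \<bullet> uvec t \<le> 1 - c" if "y \<in> X" for y
    using assms(3)[OF that] by linarith
  have "supp X t \<le> 1 - c" using assms(1) bound by (rule supp_le)
  moreover have "q \<bullet> uvec t \<le> supp X t" using bound assms(4) by (rule inner_le_supp)
  ultimately show ?thesis using assms(2) assms(3)[OF assms(4)] by linarith
qed

lemma moving_sofa_subset_Pw:
  assumes "moving_sofa S \<omega>" "standard_position S \<omega>"
  shows "S \<subseteq> Pw \<omega>"
proof
  obtain \<theta> :: "real \<Rightarrow> real" and x :: "real \<Rightarrow> pt" where "S \<noteq> {}" "\<theta> 0 = 0" "\<theta> 1 = \<omega>"
    and start: "(\<lambda>p. rot (- \<theta> 0) p + x 0) ` S \<subseteq> LH"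
    and final: "(\<lambda>p. rot (- \<theta> 1) p + x 1) ` S \<subseteq> LV"
    using assms(1) unfolding moving_sofa_def by blast
  fix p assume "p \<in> S"
  have "0 \<le> p \<bullet> uvec (pi/2) \<and> p \<bullet> uvec (pi/2) \<le> 1"
  proof (rule inner_in_unit_interval_if_supp_eq_1[where c = "snd (x 0)"])
    show "0 \<le> q \<bullet> uvec (pi/2) + snd (x 0) \<and> q \<bullet> uvec (pi/2) + snd (x 0) \<le> 1" if "q \<in> S" for q
      using start that \<open>\<theta> 0 = 0\<close> by (auto simp: LH_def rot_def inner_uvec)
  qed (use assms(2) \<open>S \<noteq> {}\<close> \<open>p \<in> S\<close> in \<open>auto simp: standard_position_def\<close>)
  moreover have "0 \<le> p \<bullet> uvec \<omega> \<and> p \<bullet> uvec \<omega> \<le> 1"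
  proof (rule inner_in_unit_interval_if_supp_eq_1[where c = "fst (x 1)"])
    show "0 \<le> q \<bullet> uvec \<omega> + fst (x 1) \<and> q \<bullet> uvec \<omega> + fst (x 1) \<le> 1" if "q \<in> S" for q
      using final that \<open>\<theta> 1 = \<omega>\<close> by (auto simp: LV_def rot_neg_eq)
  qed (use assms(2) \<open>S \<noteq> {}\<close> \<open>p \<in> S\<close> in \<open>auto simp: standard_position_def\<close>)
  ultimately show "p \<in> Pw \<omega>" by (simp add: mem_Pw_iff)
qed

lemma moving_sofa_subset_cap:
  assumes "moving_sofa S \<omega>" "standard_position S \<omega>"
  shows "S \<subseteq> cap \<omega> S"
proof -
  have "compact S" using assms(1) by (simp add: moving_sofa_def)
  then have "S \<subseteq> Qplus S t" for t by (auto simp: mem_Qplus_iff inner_le_supp_compact)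
  then show ?thesis using moving_sofa_subset_Pw[OF assms] by (auto simp: cap_def)
qed

lemma Qminus_cap_subset:
  assumes "cap \<omega> X \<noteq> {}" "t \<in> {0..\<omega>}"
  shows "Qminus (cap \<omega> X) t \<subseteq> Qminus X t"
proof -
  have "supp (cap \<omega> X) t \<le> supp X t" "supp (cap \<omega> X) (t + pi/2) \<le> supp X (t + pi/2)"
    using assms by (intro supp_le; auto simp: cap_def mem_Qplus_iff)+
  then show ?thesis by (auto simp: mem_Qminus_iff)
qed

lemma cap_monotone_sofa_eq:
  assumes "moving_sofa S \<omega>" "standard_position S \<omega>"
  shows "cap \<omega> (Pw \<omega> \<inter> (\<Inter>t\<in>{0..\<omega>}. LX S t)) = cap \<omega> S"
proof -
  let ?M = "Pw \<omega> \<inter> (\<Inter>t\<in>{0..\<omega>}. LX S t)"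
  have "S \<noteq> {}" using assms(1) by (simp add: moving_sofa_def)
  have "S \<subseteq> ?M" using moving_sofa_subset_Pw[OF assms] moving_sofa_subset_LX[OF assms(1)] by blast
  have "Qplus ?M t = Qplus S t" if "t \<in> {0..\<omega>}" for t
  proof -
    have "?M \<subseteq> Qplus S t" using LX_subset_Qplus that by blast
    then have "supp ?M t = supp S t" "supp ?M (t + pi/2) = supp S (t + pi/2)"
      using \<open>S \<noteq> {}\<close> \<open>S \<subseteq> ?M\<close> by (intro supp_eq_if_subset_halfplane; auto simp: Qplus_def)+
    then show ?thesis by (simp add: Qplus_def)
  qed
  then show ?thesis unfolding cap_def by (simp cong: INF_cong_simp)
qed

lemma mem_cap_if_dominated:
  assumes "compact S" "standard_position S \<omega>" "0 \<le> \<omega>" "p \<in> fan \<omega>"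
    and dominated: "\<And>x. x \<in> {0..\<omega> + pi/2} \<Longrightarrow> \<exists>z\<in>S. p \<bullet> uvec x \<le> z \<bullet> uvec x"
  shows "p \<in> cap \<omega> S"
proof -
  have below: "p \<bullet> uvec x \<le> supp S x" if "x \<in> {0..\<omega> + pi/2}" for x
    using dominated[OF that] inner_le_supp_compact[OF assms(1)] by (meson order_trans)
  have "p \<in> Pw \<omega>"
    using below[of "pi/2"] below[of \<omega>] assms(2-4)
    by (auto simp: mem_Pw_iff mem_fan_iff standard_position_def)
  moreover have "p \<in> Qplus S t" if "t \<in> {0..\<omega>}" for t
  proof -
    have "t \<in> {0..\<omega> + pi/2}" "t + pi/2 \<in> {0..\<omega> + pi/2}"
      using that pi_gt_zero unfolding atLeastAtMost_iff by linarith+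
    then show ?thesis using below by (simp add: mem_Qplus_iff)
  qed
  ultimately show ?thesis by (simp add: cap_def)
qed

lemma niche_point_dominated:
  assumes "moving_sofa S \<omega>" "standard_position S \<omega>" "\<omega> \<le> pi/2"
    and "p \<in> fan \<omega>" "t \<in> {0..\<omega>}" "p \<in> Qminus S t" "x \<in> {0..\<omega> + pi/2}"
  shows "\<exists>z\<in>S. p \<bullet> uvec x \<le> z \<bullet> uvec x"
proof -
  have S: "connected S" "S \<noteq> {}" "compact S" using assms(1) by (simp_all add: moving_sofa_def)
  have h: "supp S (pi/2) = 1" "supp S \<omega> = 1" using assms(2) by (simp_all add: standard_position_def)
  have fan: "0 \<le> p \<bullet> uvec (pi/2)" "0 \<le> p \<bullet> uvec \<omega>" using assms(4) by (simp_all add: mem_fan_iff)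
  have pu: "p \<bullet> uvec t + 1 < supp S t" and pv: "p \<bullet> uvec (t + pi/2) + 1 < supp S (t + pi/2)"
    using assms(6) by (simp_all add: mem_Qminus_iff)
  have "t \<noteq> 0"
  proof
    assume "t = 0"
    then show False using pv fan h by (simp only: add_0)
  qed
  moreover have "t \<noteq> pi/2"
  proof
    assume "t = pi/2"
    then show False using pu fan h by (simp only:)
  qed
  ultimately have t: "0 < t" "t < pi/2" using assms(3,5) by auto
  obtain a where a: "a \<in> S" "p \<bullet> uvec t + 1 < a \<bullet> uvec t"
    using less_suppD[OF S(2) pu] by blast
  obtain b where b: "b \<in> S" "p \<bullet> uvec (t + pi/2) + 1 < b \<bullet> uvec (t + pi/2)"
    using less_suppD[OF S(2) pv] by blast
  obtain d where d: "d \<in> S" "supp S t - 1 \<le> d \<bullet> uvec t" "supp S (t + pi/2) - 1 \<le> d \<bullet> uvec (t + pi/2)"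
    using connected_subset_LX_imp_corner_point[OF S(1,2) moving_sofa_subset_LX[OF assms(1,5)]] by blast
  consider "x < t" | "t \<le> x" "x \<le> t + pi/2" | "t + pi/2 < x" by linarith
  then show ?thesis
  proof cases
    case 1
    have "a \<bullet> uvec (pi/2) \<le> 1" using inner_le_supp_compact[OF S(3) a(1), of "pi/2"] h by simp
    then have "1 \<le> (a - p) \<bullet> uvec t" "(a - p) \<bullet> uvec (pi/2) \<le> 1"
      using a(2) fan(1) by (simp_all add: inner_diff_left)
    then have "0 \<le> (a - p) \<bullet> uvec x"
      by (rule inner_uvec_nonneg_before) (use t(2) 1 assms(7) in auto)
    then show ?thesis using a(1) unfolding inner_diff_left by auto
  next
    case 2
    have "0 \<le> (d - p) \<bullet> uvec t" "0 \<le> (d - p) \<bullet> uvec (t + pi/2)"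
      using d(2,3) pu pv by (simp_all add: inner_diff_left)
    then have "0 \<le> (d - p) \<bullet> uvec x"
      by (rule inner_uvec_nonneg_between) (use 2 in auto)
    then show ?thesis using d(1) unfolding inner_diff_left by auto
  next
    case 3
    have "b \<bullet> uvec \<omega> \<le> 1" using inner_le_supp_compact[OF S(3) b(1), of \<omega>] h by simp
    then have "1 \<le> (b - p) \<bullet> uvec (t + pi/2)" "(b - p) \<bullet> uvec \<omega> \<le> 1"
      using b(2) fan(2) by (simp_all add: inner_diff_left)
    then have "0 \<le> (b - p) \<bullet> uvec x"
      by (rule inner_uvec_nonneg_after) (use t(1) 3 assms(3,7) in auto)
    then show ?thesis using b(1) unfolding inner_diff_left by auto
  qed
qed

lemma niche_cap_subset_cap:
  assumes "moving_sofa S \<omega>" "standard_position S \<omega>" "\<omega> \<le> pi/2"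
  shows "niche \<omega> (cap \<omega> S) \<subseteq> cap \<omega> S"
proof
  fix p assume "p \<in> niche \<omega> (cap \<omega> S)"
  then obtain t where t: "t \<in> {0..\<omega>}" and fan: "p \<in> fan \<omega>" and "p \<in> Qminus (cap \<omega> S) t"
    by (auto simp: niche_def)
  moreover have "cap \<omega> S \<noteq> {}"
    using moving_sofa_subset_cap[OF assms(1,2)] assms(1) by (auto simp: moving_sofa_def)
  ultimately have "p \<in> Qminus S t" using Qminus_cap_subset by blast
  show "p \<in> cap \<omega> S"
  proof (rule mem_cap_if_dominated)
    show "\<exists>z\<in>S. p \<bullet> uvec x \<le> z \<bullet> uvec x" if "x \<in> {0..\<omega> + pi/2}" for x
      using assms fan t \<open>p \<in> Qminus S t\<close> that by (rule niche_point_dominated)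
  qed (use assms(1,2) fan t in \<open>auto simp: moving_sofa_def\<close>)
qed

theorem theorem3p17:
  fixes \<omega> :: real and S K :: "(real \<times> real) set"
  assumes "0 < \<omega>" and "\<omega> \<le> pi/2"
    and "monotone_sofa \<omega> S"
    and "K = cap \<omega> S"
  shows "niche \<omega> K \<subseteq> K"
proof -
  obtain S' where S': "moving_sofa S' \<omega>" "standard_position S' \<omega>"
    and "S = Pw \<omega> \<inter> (\<Inter>t\<in>{0..\<omega>}. LX S' t)"
    using assms(3) unfolding monotone_sofa_def by blast
  then have "K = cap \<omega> S'" using assms(4) cap_monotone_sofa_eq by blast
  then show ?thesis using niche_cap_subset_cap[OF S' assms(2)] by blast
qed

end
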